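(* Let $L\subset S^3$ be an oriented link and $\widehat{\mathcal{B}}_L$ its topological biquandle (as in the context). For every $a\in\widehat{\mathcal{B}}_L$, the maps $f_a,g_a\colon\widehat{\mathcal{B}}_L\to\widehat{\mathcal{B}}_L$ given by $f_a(x)=x\uparrow a$ and $g_a(x)=x\downarrow a$ are bijective.
   Context: An oriented link $L$ is an oriented subspace of $S^3$ homeomorphic to a finite disjoint union of circles. Let $N_L$ be a regular neighborhood of $L$ and $E_L$ the closure of $S^3\setminus N_L$; the orientation of $L$ induces an orientation of its normal bundle by the right-hand rule. Choose a 3-ball $B^3\subset S^3$ with $N_L\subset B^3$ and antipodal points $z_0,z_1\in\partial B^3$. For a path $a$, $\overline{a}(t)=a(1-t)$; $a\cdot b$ is concatenation. Let $\mathcal{B}_L$ be the set of pairs $(a_0,a_1)$ with $a_i\colon[0,1]\to E_L$ a path from a point of $\partial N_L$ to $z_i$ and $a_0(0)=a_1(0)$. Set $(a_0,a_1)\sim(b_0,b_1)$ if there is a homotopy $H_t\colon[0,1]\to E_L$ with $H_0=\overline{a_0}\cdot a_1$, $H_1=\overline{b_0}\cdot b_1$, $H_t(0)=z_0$, $H_t(1)=z_1$, $H_t(\tfrac12)\in\partial N_L$ for all $t$. Let $\widehat{\mathcal{B}}_L=\mathcal{B}_L/\!\sim$, with $[a_0,a_1]$ the class of $(a_0,a_1)$. For $p\in\partial N_L$, $m_p$ is the loop in $\partial N_L$ at $p$ going once positively around the meridian of the corresponding component of $L$. The (well-defined) operations on $\widehat{\mathcal{B}}_L$ are $[a_0,a_1]\uparrow[b_0,b_1]=[a_0\cdot\overline{b_0}\cdot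 m_{b_0(0)}\cdot b_0,\ a_1]$ and $[a_0,a_1]\downarrow[b_0,b_1]=[a_0,\ a_1\cdot\overline{b_1}\cdot m_{b_1(0)}\cdot b_1]$. The set $\widehat{\mathcal{B}}_L$ with these operations is called the topological biquandle of $L$. *)

theory Defs
  imports "HOL-Analysis.Analysis"
begin

definition S3 :: "(real^4) set" where
  "S3 = sphere 0 1"

text \<open>A point is (i, u, w) with |u| = 1 (longitude coordinate, giving the
  orientation of the i-th component) and |w| <= 1 (disc coordinate).\<close>

definition solid_tori :: "nat \<Rightarrow> (nat \<times> complex \<times> complex) set" where
  "solid_tori k = {(i, u, w). i < k \<and> norm u = 1 \<and> norm w \<le> 1}"

definition boundary_tori :: "nat \<Rightarrow> (nat \<times> complex \<times> complex) set" where
  "boundary_tori k = {(i, u, w). i < k \<and> norm u = 1 \<and> norm w = 1}"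

definition core_circles :: "nat \<Rightarrow> (nat \<times> complex \<times> complex) set" where
  "core_circles k = {(i, u, w). i < k \<and> norm u = 1 \<and> w = 0}"

text \<open>An embedding of k solid tori into S^3.  Its image is N_L, the image of
  the cores is the oriented link L (oriented by the u-coordinate).\<close>

definition tubular_link :: "nat \<Rightarrow> (nat \<times> complex \<times> complex \<Rightarrow> real^4) \<Rightarrow> bool" where
  "tubular_link k \<phi> \<longleftrightarrow>
     continuous_on (solid_tori k) \<phi> \<and> inj_on \<phi> (solid_tori k) \<and> \<phi> ` solid_tori k \<subseteq> S3"

definition link_of :: "nat \<Rightarrow> (nat \<times> complex \<times> complex \<Rightarrow> real^4) \<Rightarrow> (real^4) set" where
  "link_of k \<phi> = \<phi> ` core_circles k"

definition nbhd :: "nat \<Rightarrow> (nat \<times> complex \<times> complex \<Rightarrow> real^4) \<Rightarrow> (real^4) set" where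
  "nbhd k \<phi> = \<phi> ` solid_tori k"

definition bdry :: "nat \<Rightarrow> (nat \<times> complex \<times> complex \<Rightarrow> real^4) \<Rightarrow> (real^4) set" where
  "bdry k \<phi> = \<phi> ` boundary_tori k"

definition exterior :: "nat \<Rightarrow> (nat \<times> complex \<times> complex \<Rightarrow> real^4) \<Rightarrow> (real^4) set" where
  "exterior k \<phi> = closure (S3 - nbhd k \<phi>)"

definition meridian ::
  "nat \<Rightarrow> (nat \<times> complex \<times> complex \<Rightarrow> real^4) \<Rightarrow> real^4 \<Rightarrow> real \<Rightarrow> real^4" where
  "meridian k \<phi> p = (\<lambda>t. let q = inv_into (boundary_tori k) \<phi> p
                         in \<phi> (fst q, fst (snd q), snd (snd q) * cis (2 * pi * t)))"

definition bq_pairs ::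
  "nat \<Rightarrow> (nat \<times> complex \<times> complex \<Rightarrow> real^4) \<Rightarrow> real^4 \<Rightarrow> real^4
   \<Rightarrow> ((real \<Rightarrow> real^4) \<times> (real \<Rightarrow> real^4)) set" where
  "bq_pairs k \<phi> z0 z1 =
     {(a0, a1). path a0 \<and> path a1 \<and>
        path_image a0 \<subseteq> exterior k \<phi> \<and> path_image a1 \<subseteq> exterior k \<phi> \<and>
        pathstart a0 \<in> bdry k \<phi> \<and> pathstart a1 = pathstart a0 \<and>
        pathfinish a0 = z0 \<and> pathfinish a1 = z1}"

definition bq_rel ::
  "nat \<Rightarrow> (nat \<times> complex \<times> complex \<Rightarrow> real^4) \<Rightarrow> real^4 \<Rightarrow> real^4
   \<Rightarrow> (((real \<Rightarrow> real^4) \<times> (real \<Rightarrow> real^4)) \<times> ((real \<Rightarrow> real^4) \<times> (real \<Rightarrow> real^4))) set" where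
  "bq_rel k \<phi> z0 z1 =
     {((a0, a1), (b0, b1)).
        (a0, a1) \<in> bq_pairs k \<phi> z0 z1 \<and> (b0, b1) \<in> bq_pairs k \<phi> z0 z1 \<and>
        (\<exists>H :: real \<times> real \<Rightarrow> real^4.
           continuous_on ({0..1} \<times> {0..1}) H \<and>
           H ` ({0..1} \<times> {0..1}) \<subseteq> exterior k \<phi> \<and>
           (\<forall>s\<in>{0..1}. H (0, s) = (reversepath a0 +++ a1) s \<and>
                        H (1, s) = (reversepath b0 +++ b1) s) \<and>
           (\<forall>t\<in>{0..1}. H (t, 0) = z0 \<and> H (t, 1) = z1 \<and> H (t, 1/2) \<in> bdry k \<phi>))}"

definition top_biquandle ::
  "nat \<Rightarrow> (nat \<times> complex \<times> complex \<Rightarrow> real^4) \<Rightarrow> real^4 \<Rightarrow> real^4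
   \<Rightarrow> ((real \<Rightarrow> real^4) \<times> (real \<Rightarrow> real^4)) set set" where
  "top_biquandle k \<phi> z0 z1 = bq_pairs k \<phi> z0 z1 // bq_rel k \<phi> z0 z1"

definition bq_up ::
  "nat \<Rightarrow> (nat \<times> complex \<times> complex \<Rightarrow> real^4) \<Rightarrow> real^4 \<Rightarrow> real^4
   \<Rightarrow> ((real \<Rightarrow> real^4) \<times> (real \<Rightarrow> real^4)) set
   \<Rightarrow> ((real \<Rightarrow> real^4) \<times> (real \<Rightarrow> real^4)) set
   \<Rightarrow> ((real \<Rightarrow> real^4) \<times> (real \<Rightarrow> real^4)) set" where
  "bq_up k \<phi> z0 z1 X Y =
     (let a = (SOME x. x \<in> X); b = (SOME y. y \<in> Y)
      in bq_rel k \<phi> z0 z1 ``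
           {(fst a +++ (reversepath (fst b) +++ (meridian k \<phi> (pathstart (fst b)) +++ fst b)),
             snd a)})"

definition bq_down ::
  "nat \<Rightarrow> (nat \<times> complex \<times> complex \<Rightarrow> real^4) \<Rightarrow> real^4 \<Rightarrow> real^4
   \<Rightarrow> ((real \<Rightarrow> real^4) \<times> (real \<Rightarrow> real^4)) set
   \<Rightarrow> ((real \<Rightarrow> real^4) \<times> (real \<Rightarrow> real^4)) set
   \<Rightarrow> ((real \<Rightarrow> real^4) \<times> (real \<Rightarrow> real^4)) set" where
  "bq_down k \<phi> z0 z1 X Y =
     (let a = (SOME x. x \<in> X); b = (SOME y. y \<in> Y)
      in bq_rel k \<phi> z0 z1 ``
           {(fst a,
             snd a +++ (reversepath (snd b) +++ (meridian k \<phi> (pathstart (snd b)) +++ snd b)))})"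

end

theory Submission
  imports Defs
begin

(*
  Both families of maps are induced on the quotient by maps on representatives:
  x \<uparrow> a appends the loop c = b0^-1 m b0 at z0 to the first path, and x \<downarrow> a
  appends the analogous loop at z1 to the second path.  Appending a loop respects the
  relation, and appending its reverse is an inverse up to the relation (a path homotopy
  of the first half of a0^-1 a1 is in particular a homotopy keeping the midpoint on the
  boundary), so the induced maps are bijections.  Exchanging the roles of the two paths
  reduces the second family to the first.

  The only topology beyond path algebra is needed to see that the loop c stays in the
  exterior, i.e. that the boundary torus lies in the closure of the complement of N_L.
  This uses the ball chart around N_L and invariance of domain: a boundary point with a
  neighbourhood inside N_L would be an interior point of a half-solid-torus chart.
*)

section \<open>Maps induced on a quotient\<close>

lemma equiv_class_of_some_rep:
  assumes "equiv A r" "\<And>x y. (x, y) \<in> r \<Longrightarrow> (S x, S y) \<in> r" "x \<in> A"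
  shows "r `` {S (SOME y. y \<in> r `` {x})} = r `` {S x}"
proof -
  have "(x, SOME y. y \<in> r `` {x}) \<in> r"
    using assms(1,3) by (metis Image_singleton_iff equiv_class_self someI)
  then show ?thesis using assms(1,2) by (metis equiv_class_eq)
qed

lemma bij_betw_quotient_map:
  assumes r: "equiv A r"
    and TA: "\<And>x. x \<in> A \<Longrightarrow> T x \<in> A" and T'A: "\<And>x. x \<in> A \<Longrightarrow> T' x \<in> A"
    and T: "\<And>x y. (x, y) \<in> r \<Longrightarrow> (T x, T y) \<in> r"
    and T': "\<And>x y. (x, y) \<in> r \<Longrightarrow> (T' x, T' y) \<in> r"
    and T'T: "\<And>x. x \<in> A \<Longrightarrow> (T' (T x), x) \<in> r"
    and TT': "\<And>x. x \<in> A \<Longrightarrow> (T (T' x), x) \<in> r"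
  shows "bij_betw (\<lambda>X. r `` {T (SOME x. x \<in> X)}) (A//r) (A//r)"
proof -
  have inverse: "r `` {S (SOME y. y \<in> X)} \<in> A//r \<and> r `` {S' (SOME y. y \<in> r `` {S (SOME y. y \<in> X)})} = X"
    if S: "\<And>x. x \<in> A \<Longrightarrow> S x \<in> A" "\<And>x y. (x, y) \<in> r \<Longrightarrow> (S x, S y) \<in> r"
      and S': "\<And>x y. (x, y) \<in> r \<Longrightarrow> (S' x, S' y) \<in> r"
      and S'S: "\<And>x. x \<in> A \<Longrightarrow> (S' (S x), x) \<in> r" and "X \<in> A//r" for S S' X
  proof -
    obtain x where x: "x \<in> A" "X = r `` {x}" using \<open>X \<in> A//r\<close> by (rule quotientE)
    have "r `` {S (SOME y. y \<in> X)} = r `` {S x}"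
      using equiv_class_of_some_rep[OF r S(2) x(1)] x(2) by simp
    moreover have "r `` {S' (SOME y. y \<in> r `` {S x})} = r `` {S' (S x)}"
      using equiv_class_of_some_rep[OF r S' S(1)[OF x(1)]] .
    moreover have "r `` {S' (S x)} = X" using equiv_class_eq[OF r S'S[OF x(1)]] x(2) by simp
    ultimately show ?thesis using S(1)[OF x(1)] by (simp add: quotientI)
  qed
  show ?thesis
    by (rule bij_betw_byWitness[where f' = "\<lambda>X. r `` {T' (SOME x. x \<in> X)}"])
      (use inverse[OF TA T T' T'T] inverse[OF T'A T' T TT'] in auto)
qed

section \<open>Homotopies with a marked midpoint\<close>

text \<open>Homotopies of paths from z0 to z1 keeping the midpoint in B; for E the exterior and B
  the boundary of N_L this is the relation \<open>\<sim>\<close> of the biquandle, applied to \<open>a0\<inverse> a1\<close>.\<close>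

definition marked_homotopy :: "'a::topological_space set \<Rightarrow> 'a set \<Rightarrow> 'a \<Rightarrow> 'a
    \<Rightarrow> (real \<Rightarrow> 'a) \<Rightarrow> (real \<Rightarrow> 'a) \<Rightarrow> (real \<times> real \<Rightarrow> 'a) \<Rightarrow> bool" where
  "marked_homotopy E B z0 z1 g h H \<longleftrightarrow>
     continuous_on ({0..1} \<times> {0..1}) H \<and> H ` ({0..1} \<times> {0..1}) \<subseteq> E \<and>
     (\<forall>s\<in>{0..1}. H (0, s) = g s \<and> H (1, s) = h s) \<and>
     (\<forall>t\<in>{0..1}. H (t, 0) = z0 \<and> H (t, 1) = z1 \<and> H (t, 1/2) \<in> B)"

definition marked_homotopic :: "'a::topological_space set \<Rightarrow> 'a set \<Rightarrow> 'a \<Rightarrow> 'a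
    \<Rightarrow> (real \<Rightarrow> 'a) \<Rightarrow> (real \<Rightarrow> 'a) \<Rightarrow> bool" where
  "marked_homotopic E B z0 z1 g h \<longleftrightarrow> (\<exists>H. marked_homotopy E B z0 z1 g h H)"

lemma marked_homotopyD:
  assumes "marked_homotopy E B z0 z1 g h H"
  shows "continuous_on ({0..1} \<times> {0..1}) H"
    and "\<And>t s. t \<in> {0..1} \<Longrightarrow> s \<in> {0..1} \<Longrightarrow> H (t, s) \<in> E"
    and "\<And>s. s \<in> {0..1} \<Longrightarrow> H (0, s) = g s" "\<And>s. s \<in> {0..1} \<Longrightarrow> H (1, s) = h s"
    and "\<And>t. t \<in> {0..1} \<Longrightarrow> H (t, 0) = z0" "\<And>t. t \<in> {0..1} \<Longrightarrow> H (t, 1) = z1"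
    and "\<And>t. t \<in> {0..1} \<Longrightarrow> H (t, 1/2) \<in> B"
  using assms unfolding marked_homotopy_def image_subset_iff by blast+

lemma marked_homotopicI:
  fixes H :: "real \<times> real \<Rightarrow> 'a::topological_space"
  assumes "continuous_on ({0..1} \<times> {0..1}) H"
    and "\<And>t s. t \<in> {0..1} \<Longrightarrow> s \<in> {0..1} \<Longrightarrow> H (t, s) \<in> E"
    and "\<And>s. s \<in> {0..1} \<Longrightarrow> H (0, s) = g s" "\<And>s. s \<in> {0..1} \<Longrightarrow> H (1, s) = h s"
    and "\<And>t. t \<in> {0..1} \<Longrightarrow> H (t, 0) = z0" "\<And>t. t \<in> {0..1} \<Longrightarrow> H (t, 1) = z1"
    and "\<And>t. t \<in> {0..1} \<Longrightarrow> H (t, 1/2) \<in> B"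
  shows "marked_homotopic E B z0 z1 g h"
  unfolding marked_homotopic_def marked_homotopy_def image_subset_iff using assms by blast

lemma continuous_on_reparam_square:
  assumes "continuous_on ({0..1} \<times> {0..1}) H" "continuous_on S \<rho>" "\<rho> ` S \<subseteq> {0..1} \<times> {0..1}"
  shows "continuous_on S (\<lambda>x. H (\<rho> x))"
  using continuous_on_compose2[OF assms(1) assms(2,3)] .

lemma marked_homotopic_refl:
  assumes "path g" "path_image g \<subseteq> E" "g 0 = z0" "g 1 = z1" "g (1/2) \<in> B"
  shows "marked_homotopic E B z0 z1 g g"
proof (rule marked_homotopicI[where H = "\<lambda>x. g (snd x)"])
  show "continuous_on ({0..1} \<times> {0..1}) (\<lambda>x. g (snd x))"
    using assms(1) unfolding path_def
    by (rule continuous_on_compose2[of "{0..1}" g _ snd]) (auto intro: continuous_on_snd)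
qed (use assms in \<open>auto simp: path_image_def\<close>)

lemma marked_homotopic_sym:
  assumes "marked_homotopic E B z0 z1 g h"
  shows "marked_homotopic E B z0 z1 h g"
proof -
  obtain H where H: "marked_homotopy E B z0 z1 g h H"
    using assms by (auto simp: marked_homotopic_def)
  show ?thesis
    by (intro marked_homotopicI[where H = "\<lambda>x. H (1 - fst x, snd x)"]
        continuous_on_reparam_square[OF marked_homotopyD(1)[OF H]] continuous_intros)
      (auto intro!: marked_homotopyD[OF H])
qed

lemma marked_homotopic_reversepath:
  assumes "marked_homotopic E B z0 z1 g h"
  shows "marked_homotopic E B z1 z0 (reversepath g) (reversepath h)"
proof -
  obtain H where H: "marked_homotopy E B z0 z1 g h H"
    using assms by (auto simp: marked_homotopic_def)
  show ?thesis
    by (intro marked_homotopicI[where H = "\<lambda>x. H (fst x, 1 - snd x)"]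
        continuous_on_reparam_square[OF marked_homotopyD(1)[OF H]] continuous_intros)
      (auto simp: reversepath_def intro!: marked_homotopyD[OF H])
qed

lemma marked_homotopic_trans:
  assumes "marked_homotopic E B z0 z1 g h" "marked_homotopic E B z0 z1 h l"
  shows "marked_homotopic E B z0 z1 g l"
proof -
  obtain H1 H2 where H1: "marked_homotopy E B z0 z1 g h H1" and H2: "marked_homotopy E B z0 z1 h l H2"
    using assms by (auto simp: marked_homotopic_def)
  let ?S = "{0..1} \<times> {0..1::real}"
  have "continuous_on ?S (\<lambda>x. if fst x \<le> 1/2 then H1 (2 * fst x, snd x) else H2 (2 * fst x - 1, snd x))"
  proof (rule continuous_on_cases_le)
    show "continuous_on {x \<in> ?S. fst x \<le> 1/2} (\<lambda>x. H1 (2 * fst x, snd x))"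
      by (rule continuous_on_reparam_square[OF marked_homotopyD(1)[OF H1]];
          (intro continuous_intros)?; auto)
    show "continuous_on {x \<in> ?S. 1/2 \<le> fst x} (\<lambda>x. H2 (2 * fst x - 1, snd x))"
      by (rule continuous_on_reparam_square[OF marked_homotopyD(1)[OF H2]];
          (intro continuous_intros)?; auto)
    show "H1 (2 * fst x, snd x) = H2 (2 * fst x - 1, snd x)" if "x \<in> ?S" "fst x = 1/2" for x
    proof -
      have "2 * fst x = 1" "2 * fst x - 1 = 0" using that(2) by simp_all
      then show ?thesis
        using that(1) marked_homotopyD(4)[OF H1] marked_homotopyD(3)[OF H2] by auto
    qed
  qed (intro continuous_intros)
  then show ?thesis
    by (rule marked_homotopicI) (auto intro!: marked_homotopyD[OF H1] marked_homotopyD[OF H2])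
qed

lemma marked_homotopic_join_homotopic_paths:
  fixes E :: "'a::topological_space set"
  assumes hp: "homotopic_paths E p p'" and "pathfinish p \<in> B"
    and q: "path q" "path_image q \<subseteq> E" "pathstart q = pathfinish p"
  shows "marked_homotopic E B (pathstart p) (pathfinish q) (p +++ q) (p' +++ q)"
proof -
  obtain h :: "real \<times> real \<Rightarrow> 'a"
    where ch: "continuous_on ({0..1} \<times> {0..1}) h" and hE: "h \<in> ({0..1} \<times> {0..1}) \<rightarrow> E"
    and h0: "\<forall>x \<in> {0..1}. h (0, x) = p x" and h1: "\<forall>x \<in> {0..1}. h (1, x) = p' x"
    and ends: "\<forall>t \<in> {0..1}.
      pathstart (h \<circ> Pair t) = pathstart p \<and> pathfinish (h \<circ> Pair t) = pathfinish p"
    using hp unfolding homotopic_paths by blast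
  define H where "H = (\<lambda>y. ((h \<circ> Pair (fst y)) +++ q) (snd y))"
  have H: "H (t, s) = (if s \<le> 1/2 then h (t, 2 * s) else q (2 * s - 1))" for t s
    by (simp add: H_def joinpaths_def)
  show ?thesis
  proof (rule marked_homotopicI)
    show "continuous_on ({0..1} \<times> {0..1}) H" unfolding H_def
    proof (rule continuous_on_homotopic_join_lemma)
      show "continuous_on ({0..1} \<times> {0..1}) (\<lambda>y. (h \<circ> Pair (fst y)) (snd y))"
        using ch by (simp add: o_def)
      show "continuous_on ({0..1} \<times> {0..1}) (\<lambda>y. q (snd y))"
        using q(1) unfolding path_def
        by (rule continuous_on_compose2[of "{0..1}" q _ snd]) (auto intro: continuous_on_snd)
      show "pathfinish (h \<circ> Pair t) = pathstart q" if "t \<in> {0..1}" for t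
        using ends that q(3) by simp
    qed
    show "H (t, s) \<in> E" if "t \<in> {0..1}" "s \<in> {0..1}" for t s
      using that hE q(2) by (auto simp: H path_image_def)
  qed (use h0 h1 ends assms(2) in \<open>auto simp: H joinpaths_def pathstart_def pathfinish_def\<close>)
qed

lemma joinpaths_assoc_reparam:
  "((p +++ q) +++ r) s = (if s \<le> 1/4 then p (4 * s) else (q +++ r) (min (2 * s - 1/2) s))"
  by (simp add: joinpaths_def min_def)

lemma marked_homotopic_prepend:
  assumes "marked_homotopic E B z0 z1 (q +++ r) (q' +++ r')"
    and p: "path p" "path_image p \<subseteq> E" "pathfinish p = z0"
  shows "marked_homotopic E B (pathstart p) z1 ((p +++ q) +++ r) ((p +++ q') +++ r')"
proof -
  obtain H where H: "marked_homotopy E B z0 z1 (q +++ r) (q' +++ r') H"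
    using assms(1) by (auto simp: marked_homotopic_def)
  define K where "K = (\<lambda>(t, s). if s \<le> 1/4 then p (4 * s) else H (t, min (2 * s - 1/2) s))"
  let ?S = "{0..1} \<times> {0..1::real}"
  have "continuous_on ?S K"
    unfolding K_def case_prod_unfold
  proof (rule continuous_on_cases_le)
    show "continuous_on {x \<in> ?S. snd x \<le> 1/4} (\<lambda>x. p (4 * snd x))"
      by (rule continuous_on_compose2[OF p(1)[unfolded path_def]]; (intro continuous_intros)?; auto)
    show "continuous_on {x \<in> ?S. 1/4 \<le> snd x} (\<lambda>x. H (fst x, min (2 * snd x - 1/2) (snd x)))"
      by (rule continuous_on_reparam_square[OF marked_homotopyD(1)[OF H]];
          (intro continuous_intros)?; auto simp: min_def)
    have "p (4 * s) = H (t, min (2 * s - 1/2) s)" if "t \<in> {0..1}" "s = 1/4" for t s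
      using marked_homotopyD(5)[OF H that(1)] p(3) unfolding that(2) by (simp add: pathfinish_def)
    then show "p (4 * snd x) = H (fst x, min (2 * snd x - 1/2) (snd x))"
      if "x \<in> ?S" "snd x = 1/4" for x
      using that by auto
  qed (intro continuous_intros)
  then show ?thesis
  proof (rule marked_homotopicI)
    show "K (t, s) \<in> E" if "t \<in> {0..1}" "s \<in> {0..1}" for t s
      using that p(2) marked_homotopyD(2)[OF H] by (auto simp: K_def path_image_def min_def)
  qed (auto simp: K_def joinpaths_assoc_reparam pathstart_def marked_homotopyD[OF H])
qed

section \<open>The boundary tori lie in the exterior\<close>

lemma image_inverse_chart_subset_interior:
  fixes f :: "'a::euclidean_space \<Rightarrow> 'c::t2_space" and h :: "'b::euclidean_space \<Rightarrow> 'c"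
  assumes "open U" "continuous_on U f" "inj_on f U"
    and "compact D" "continuous_on D h" "inj_on h D"
    and "f ` U \<subseteq> h ` D" and "DIM('b) \<le> DIM('a)"
  shows "the_inv_into D h ` f ` U \<subseteq> interior D"
proof (rule interior_maximal)
  have "continuous_on (h ` D) (the_inv_into D h)"
    using assms(5,4,6) by (rule continuous_on_inv_into)
  then have "continuous_on U (the_inv_into D h \<circ> f)"
    using assms(2,7) by (metis continuous_on_compose continuous_on_subset)
  moreover have "inj_on (the_inv_into D h \<circ> f) U"
    using assms(3,6,7) by (metis comp_inj_on inj_on_subset inj_on_the_inv_into)
  ultimately have "open ((the_inv_into D h \<circ> f) ` U)"
    using invariance_of_domain_gen[OF assms(1) _ _ assms(8)] by blast
  then show "open (the_inv_into D h ` f ` U)" by (simp add: image_comp)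
  show "the_inv_into D h ` f ` U \<subseteq> D"
    using assms(7) by (blast intro: the_inv_into_into[OF assms(6) _ subset_refl])
qed

lemma compact_solid_tori: "compact (solid_tori k)"
proof -
  have "solid_tori k = (\<Union>i<k. {i} \<times> (sphere 0 1 \<times> cball 0 1))"
    by (auto simp: solid_tori_def)
  then show ?thesis by (simp add: compact_UN compact_Times)
qed

definition torus_chart :: "nat \<Rightarrow> complex \<Rightarrow> real \<times> complex \<Rightarrow> nat \<times> complex \<times> complex" where
  "torus_chart i u0 = (\<lambda>(\<theta>, w). (i, u0 * cis \<theta>, w))"

lemma continuous_on_torus_chart: "continuous_on S (torus_chart i u0)"
  unfolding torus_chart_def case_prod_unfold by (intro continuous_intros)

lemma inj_on_torus_chart:
  assumes "u0 \<noteq> 0"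
  shows "inj_on (torus_chart i u0) ({-pi/2..pi/2} \<times> cball 0 1)"
proof (rule inj_onI)
  fix x y assume "x \<in> {-pi/2..pi/2} \<times> cball 0 1" "y \<in> {-pi/2..pi/2} \<times> cball 0 1"
    and eq: "torus_chart i u0 x = torus_chart i u0 y"
  moreover have "{-pi/2..pi/2} \<subseteq> {-pi<..pi}" using pi_gt_zero by (auto simp del: pi_gt_zero)
  ultimately have "fst x \<in> {-pi<..pi}" "fst y \<in> {-pi<..pi}" by auto
  moreover have "cis (fst x) = cis (fst y)" "snd x = snd y"
    using eq assms by (auto simp: torus_chart_def case_prod_unfold)
  ultimately show "x = y" by (metis Arg_cis prod.expand)
qed

lemma torus_chart_in_solid_tori:
  assumes "i < k" "norm u0 = 1"
  shows "torus_chart i u0 ` ({-pi/2..pi/2} \<times> cball 0 1) \<subseteq> solid_tori k"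
  using assms by (auto simp: torus_chart_def solid_tori_def norm_mult)

lemma solid_tori_in_torus_chart:
  assumes "(i, u, w) \<in> solid_tori k" "norm u0 = 1" "Re (u * cnj u0) > 0"
  shows "(i, u, w) \<in> torus_chart i u0 ` ({-pi/2..pi/2} \<times> cball 0 1)"
proof -
  let ?z = "u * cnj u0"
  have unit: "norm ?z = 1" "u0 * cnj u0 = 1"
    using assms(1,2) by (auto simp: solid_tori_def norm_mult complex_norm_square[symmetric])
  then have "?z \<noteq> 0" by auto
  then have "cis (Arg ?z) = ?z" by (simp add: cis_Arg sgn_div_norm unit(1))
  then have "torus_chart i u0 (Arg ?z, w) = (i, u, w)"
    using unit(2) by (simp add: torus_chart_def mult.left_commute)
  moreover have "(Arg ?z, w) \<in> {-pi/2..pi/2} \<times> cball 0 1"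
    using assms Arg_Re_pos[of ?z] by (auto simp: solid_tori_def)
  ultimately show ?thesis by (metis image_eqI)
qed

lemma embedding_torus_chart:
  assumes "tubular_link k \<phi>" "i < k" "norm u0 = 1"
  shows "continuous_on ({-pi/2..pi/2} \<times> cball 0 1) (\<phi> \<circ> torus_chart i u0)"
    and "inj_on (\<phi> \<circ> torus_chart i u0) ({-pi/2..pi/2} \<times> cball 0 1)"
proof -
  have \<phi>: "continuous_on (solid_tori k) \<phi>" "inj_on \<phi> (solid_tori k)"
    using assms(1) by (auto simp: tubular_link_def)
  note sub = torus_chart_in_solid_tori[OF assms(2,3)]
  have "u0 \<noteq> 0" using assms(3) by auto
  show "continuous_on ({-pi/2..pi/2} \<times> cball 0 1) (\<phi> \<circ> torus_chart i u0)"
    using continuous_on_compose[OF continuous_on_torus_chart continuous_on_subset[OF \<phi>(1) sub]] .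
  show "inj_on (\<phi> \<circ> torus_chart i u0) ({-pi/2..pi/2} \<times> cball 0 1)"
    using comp_inj_on[OF inj_on_torus_chart[OF \<open>u0 \<noteq> 0\<close>] inj_on_subset[OF \<phi>(2) sub]] .
qed

lemma nbhd_near_point_in_torus_chart:
  assumes tl: "tubular_link k \<phi>" and p: "(i, u0, w0) \<in> solid_tori k"
  shows "\<exists>\<delta>>0. \<forall>y\<in>nbhd k \<phi>. dist (\<phi> (i, u0, w0)) y < \<delta> \<longrightarrow>
           y \<in> (\<phi> \<circ> torus_chart i u0) ` ({-pi/2..pi/2} \<times> cball 0 1)"
proof -
  have u0: "norm u0 = 1" using p by (simp add: solid_tori_def)
  have \<phi>: "continuous_on (solid_tori k) \<phi>" "inj_on \<phi> (solid_tori k)"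
    using tl by (auto simp: tubular_link_def)
  define C where "C = solid_tori k \<inter> ((- {i}) \<times> UNIV \<union> UNIV \<times> {u. Re (u * cnj u0) \<le> 0} \<times> UNIV)"
  have "compact C"
    unfolding C_def by (intro compact_Int_closed compact_solid_tori closed_Un closed_Times
        closed_Collect_le continuous_intros) (auto simp: open_discrete)
  then have "closed (\<phi> ` C)"
    using \<phi>(1) by (auto simp: C_def intro: compact_imp_closed compact_continuous_image continuous_on_subset)
  moreover have "\<phi> (i, u0, w0) \<notin> \<phi> ` C"
  proof -
    have "Re (u0 * cnj u0) = 1" using u0 by (simp add: complex_norm_square[symmetric])
    then have "(i, u0, w0) \<notin> C" by (simp add: C_def)
    then show ?thesis using \<phi>(2) p by (auto simp: C_def inj_on_def)
  qed
  ultimately obtain \<delta> where "\<delta> > 0" and \<delta>: "ball (\<phi> (i, u0, w0)) \<delta> \<inter> \<phi> ` C = {}"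
    by (metis open_Compl open_contains_ball_eq Compl_iff disjoint_eq_subset_Compl)
  have "y \<in> (\<phi> \<circ> torus_chart i u0) ` ({-pi/2..pi/2} \<times> cball 0 1)"
    if "y \<in> nbhd k \<phi>" "dist (\<phi> (i, u0, w0)) y < \<delta>" for y
  proof -
    obtain j u w where x: "(j, u, w) \<in> solid_tori k" "y = \<phi> (j, u, w)"
      using \<open>y \<in> nbhd k \<phi>\<close> by (auto simp: nbhd_def)
    then have "(j, u, w) \<notin> C" using \<delta> that(2) by auto
    then have "j = i" "Re (u * cnj u0) > 0" using x(1) by (auto simp: C_def)
    then show ?thesis using solid_tori_in_torus_chart[OF x(1)[unfolded \<open>j = i\<close>] u0] x(2) by auto
  qed
  then show ?thesis using \<open>\<delta> > 0\<close> by blast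
qed

lemma bdry_point_not_surrounded_by_nbhd:
  fixes \<beta> :: "real^3 \<Rightarrow> real^4"
  assumes tl: "tubular_link k \<phi>"
    and \<beta>: "continuous_on (cball 0 1) \<beta>" "inj_on \<beta> (cball 0 1)" "\<beta> ` cball 0 1 \<subseteq> S3"
    and nb: "nbhd k \<phi> \<subseteq> \<beta> ` ball 0 1"
    and p: "(i, u0, w0) \<in> solid_tori k" and "norm w0 = 1"
    and "\<epsilon> > 0" and \<epsilon>: "\<And>y. y \<in> S3 \<Longrightarrow> dist y (\<phi> (i, u0, w0)) < \<epsilon> \<Longrightarrow> y \<in> nbhd k \<phi>"
  shows False
proof -
  define q where "q = \<phi> (i, u0, w0)"
  let ?D = "{-pi/2..pi/2} \<times> cball (0::complex) 1" and ?h = "\<phi> \<circ> torus_chart i u0"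
  obtain \<delta> where "\<delta> > 0" and \<delta>: "\<forall>y\<in>nbhd k \<phi>. dist q y < \<delta> \<longrightarrow> y \<in> ?h ` ?D"
    using nbhd_near_point_in_torus_chart[OF tl p] unfolding q_def by blast
  define U where "U = ball 0 1 \<inter> \<beta> -` ball q (min \<epsilon> \<delta>)"
  have "open U"
    unfolding U_def by (rule continuous_open_preimage[OF continuous_on_subset[OF \<beta>(1)]]) auto
  have "\<beta> ` U \<subseteq> ?h ` ?D"
  proof
    fix y assume "y \<in> \<beta> ` U"
    then obtain x where x: "x \<in> ball 0 1" "y = \<beta> x" "dist q y < min \<epsilon> \<delta>"
      by (auto simp: U_def)
    then have "y \<in> S3" using \<beta>(3) by auto
    then have "y \<in> nbhd k \<phi>" using \<epsilon> x(3) by (simp add: dist_commute q_def)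
    then show "y \<in> ?h ` ?D" using \<delta> x(3) by simp
  qed
  have "i < k" "norm u0 = 1" using p by (auto simp: solid_tori_def)
  note chart = embedding_torus_chart[OF tl this]
  have "the_inv_into ?D ?h ` \<beta> ` U \<subseteq> interior ?D"
    by (rule image_inverse_chart_subset_interior[OF \<open>open U\<close> _ _ _ chart \<open>\<beta> ` U \<subseteq> ?h ` ?D\<close>])
      (use \<beta> in \<open>auto simp: U_def compact_Times intro: continuous_on_subset inj_on_subset\<close>)
  moreover have "q \<in> \<beta> ` U"
  proof -
    obtain x0 where "x0 \<in> ball 0 1" "q = \<beta> x0"
      using nb p by (auto simp: nbhd_def q_def)
    then show ?thesis using \<open>\<epsilon> > 0\<close> \<open>\<delta> > 0\<close> by (auto simp: U_def)
  qed
  moreover have "the_inv_into ?D ?h q = (0, w0)"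
    using \<open>norm w0 = 1\<close> by (intro the_inv_into_f_eq[OF chart(2)]) (auto simp: torus_chart_def q_def)
  ultimately have "(0, w0) \<in> {-pi/2<..<pi/2} \<times> ball 0 1"
    by (force simp: interior_Times)
  then show False using \<open>norm w0 = 1\<close> by simp
qed

lemma bdry_subset_exterior:
  fixes \<beta> :: "real^3 \<Rightarrow> real^4"
  assumes "tubular_link k \<phi>"
    and "continuous_on (cball 0 1) \<beta>" "inj_on \<beta> (cball 0 1)" "\<beta> ` cball 0 1 \<subseteq> S3"
    and "nbhd k \<phi> \<subseteq> \<beta> ` ball 0 1"
  shows "bdry k \<phi> \<subseteq> exterior k \<phi>"
proof
  fix q assume "q \<in> bdry k \<phi>"
  then obtain i u0 w0 where p: "(i, u0, w0) \<in> solid_tori k" "norm w0 = 1" and q: "q = \<phi> (i, u0, w0)"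
    by (auto simp: bdry_def boundary_tori_def solid_tori_def)
  show "q \<in> exterior k \<phi>"
    unfolding exterior_def closure_approachable q
    using bdry_point_not_surrounded_by_nbhd[OF assms p] by (metis Diff_iff not_le)
qed

section \<open>The relation on pairs of paths\<close>

lemma bq_rel_iff:
  "((a0, a1), (b0, b1)) \<in> bq_rel k \<phi> z0 z1 \<longleftrightarrow>
     (a0, a1) \<in> bq_pairs k \<phi> z0 z1 \<and> (b0, b1) \<in> bq_pairs k \<phi> z0 z1 \<and>
     marked_homotopic (exterior k \<phi>) (bdry k \<phi>) z0 z1 (reversepath a0 +++ a1) (reversepath b0 +++ b1)"
  by (simp add: bq_rel_def marked_homotopic_def marked_homotopy_def)

lemma bq_pairs_joined_path:
  assumes "(a0, a1) \<in> bq_pairs k \<phi> z0 z1"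
  shows "path (reversepath a0 +++ a1)" "path_image (reversepath a0 +++ a1) \<subseteq> exterior k \<phi>"
    and "(reversepath a0 +++ a1) 0 = z0" "(reversepath a0 +++ a1) 1 = z1"
    and "(reversepath a0 +++ a1) (1/2) \<in> bdry k \<phi>"
proof -
  show "path (reversepath a0 +++ a1)" using assms by (simp add: bq_pairs_def)
  show "path_image (reversepath a0 +++ a1) \<subseteq> exterior k \<phi>"
    using assms path_image_join_subset[of "reversepath a0" a1] by (auto simp: bq_pairs_def)
qed (use assms in \<open>auto simp: bq_pairs_def joinpaths_def reversepath_def pathstart_def pathfinish_def\<close>)

lemma equiv_bq_rel: "equiv (bq_pairs k \<phi> z0 z1) (bq_rel k \<phi> z0 z1)"
proof (rule equivI)
  show "bq_rel k \<phi> z0 z1 \<subseteq> bq_pairs k \<phi> z0 z1 \<times> bq_pairs k \<phi> z0 z1"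
    by (auto simp: bq_rel_def)
  have "marked_homotopic (exterior k \<phi>) (bdry k \<phi>) z0 z1 (reversepath a0 +++ a1) (reversepath a0 +++ a1)"
    if "(a0, a1) \<in> bq_pairs k \<phi> z0 z1" for a0 a1
    using bq_pairs_joined_path[OF that] by (rule marked_homotopic_refl)
  then show "refl_on (bq_pairs k \<phi> z0 z1) (bq_rel k \<phi> z0 z1)"
    by (auto intro!: refl_onI simp: bq_rel_iff)
  show "sym (bq_rel k \<phi> z0 z1)"
    by (auto intro!: symI simp: bq_rel_iff intro: marked_homotopic_sym)
  show "trans (bq_rel k \<phi> z0 z1)"
    by (auto intro!: transI simp: bq_rel_iff intro: marked_homotopic_trans)
qed

lemma bq_pairs_swap: "(a0, a1) \<in> bq_pairs k \<phi> z0 z1 \<Longrightarrow> (a1, a0) \<in> bq_pairs k \<phi> z1 z0"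
  by (auto simp: bq_pairs_def)

lemma bq_rel_swap:
  assumes "((a0, a1), (b0, b1)) \<in> bq_rel k \<phi> z0 z1"
  shows "((a1, a0), (b1, b0)) \<in> bq_rel k \<phi> z1 z0"
proof -
  have P: "(a0, a1) \<in> bq_pairs k \<phi> z0 z1" "(b0, b1) \<in> bq_pairs k \<phi> z0 z1"
    and H: "marked_homotopic (exterior k \<phi>) (bdry k \<phi>) z0 z1 (reversepath a0 +++ a1) (reversepath b0 +++ b1)"
    using assms by (simp_all only: bq_rel_iff)
  have "reversepath (reversepath a0 +++ a1) = reversepath a1 +++ a0"
    "reversepath (reversepath b0 +++ b1) = reversepath b1 +++ b0"
    using P by (simp_all add: bq_pairs_def reversepath_joinpaths)
  then show ?thesis
    using marked_homotopic_reversepath[OF H] P by (simp add: bq_rel_iff bq_pairs_swap)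
qed

lemma bq_pairs_append_loop:
  assumes "(a0, a1) \<in> bq_pairs k \<phi> z0 z1"
    and "path c" "path_image c \<subseteq> exterior k \<phi>" "pathstart c = z0" "pathfinish c = z0"
  shows "(a0 +++ c, a1) \<in> bq_pairs k \<phi> z0 z1"
  using assms path_image_join_subset[of a0 c] by (auto simp: bq_pairs_def)

lemma bq_rel_append_loop:
  assumes "((a0, a1), (b0, b1)) \<in> bq_rel k \<phi> z0 z1"
    and c: "path c" "path_image c \<subseteq> exterior k \<phi>" "pathstart c = z0" "pathfinish c = z0"
  shows "((a0 +++ c, a1), (b0 +++ c, b1)) \<in> bq_rel k \<phi> z0 z1"
proof -
  have P: "(a0, a1) \<in> bq_pairs k \<phi> z0 z1" "(b0, b1) \<in> bq_pairs k \<phi> z0 z1"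
    and H: "marked_homotopic (exterior k \<phi>) (bdry k \<phi>) z0 z1 (reversepath a0 +++ a1) (reversepath b0 +++ b1)"
    using assms(1) by (auto simp: bq_rel_iff)
  have "marked_homotopic (exterior k \<phi>) (bdry k \<phi>) (pathstart (reversepath c)) z1
      ((reversepath c +++ reversepath a0) +++ a1) ((reversepath c +++ reversepath b0) +++ b1)"
    by (rule marked_homotopic_prepend[OF H]) (use c in auto)
  then have "marked_homotopic (exterior k \<phi>) (bdry k \<phi>) z0 z1
      ((reversepath c +++ reversepath a0) +++ a1) ((reversepath c +++ reversepath b0) +++ b1)"
    using c(4) by simp
  moreover have "reversepath (a0 +++ c) = reversepath c +++ reversepath a0"
    "reversepath (b0 +++ c) = reversepath c +++ reversepath b0"
    using P c by (auto simp: bq_pairs_def reversepath_joinpaths)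
  ultimately show ?thesis
    using P c by (simp add: bq_rel_iff bq_pairs_append_loop)
qed

lemma bq_rel_append_loop_reversepath:
  assumes a: "(a0, a1) \<in> bq_pairs k \<phi> z0 z1"
    and c: "path c" "path_image c \<subseteq> exterior k \<phi>" "pathstart c = z0" "pathfinish c = z0"
  shows "(((a0 +++ c) +++ reversepath c, a1), (a0, a1)) \<in> bq_rel k \<phi> z0 z1"
proof -
  let ?E = "exterior k \<phi>"
  have a': "path a0" "path_image a0 \<subseteq> ?E" "pathfinish a0 = z0" "path a1" "path_image a1 \<subseteq> ?E"
    "pathstart a1 = pathstart a0" "pathstart a0 \<in> bdry k \<phi>" "pathfinish a1 = z1"
    using a by (auto simp: bq_pairs_def)
  have "homotopic_paths ?E ((a0 +++ c) +++ reversepath c) (a0 +++ (c +++ reversepath c))"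
    using a' c by (intro homotopic_paths_sym[OF homotopic_paths_assoc]) auto
  also have "homotopic_paths ?E \<dots> (a0 +++ linepath z0 z0)"
    using a' c by (intro homotopic_paths_join homotopic_paths_rinv[of c ?E, simplified c(3)]) auto
  also have "homotopic_paths ?E \<dots> a0"
    using a' by (intro homotopic_paths_rid') auto
  finally have "homotopic_paths ?E (reversepath ((a0 +++ c) +++ reversepath c)) (reversepath a0)"
    by (simp add: homotopic_paths_reversepath)
  then have "marked_homotopic ?E (bdry k \<phi>) (pathstart (reversepath ((a0 +++ c) +++ reversepath c)))
      (pathfinish a1) (reversepath ((a0 +++ c) +++ reversepath c) +++ a1) (reversepath a0 +++ a1)"
    by (rule marked_homotopic_join_homotopic_paths) (use a' c in auto)
  then have "marked_homotopic ?E (bdry k \<phi>) z0 z1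
      (reversepath ((a0 +++ c) +++ reversepath c) +++ a1) (reversepath a0 +++ a1)"
    using a' c by simp
  moreover have "((a0 +++ c) +++ reversepath c, a1) \<in> bq_pairs k \<phi> z0 z1"
    using a c by (intro bq_pairs_append_loop) auto
  ultimately show ?thesis using a by (simp add: bq_rel_iff)
qed

lemma bq_pairs_append_loop_snd:
  assumes "(a0, a1) \<in> bq_pairs k \<phi> z0 z1"
    and "path c" "path_image c \<subseteq> exterior k \<phi>" "pathstart c = z1" "pathfinish c = z1"
  shows "(a0, a1 +++ c) \<in> bq_pairs k \<phi> z0 z1"
  using bq_pairs_swap[OF bq_pairs_append_loop[OF bq_pairs_swap[OF assms(1)] assms(2-)]] .

lemma bq_rel_append_loop_snd:
  assumes "((a0, a1), (b0, b1)) \<in> bq_rel k \<phi> z0 z1"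
    and "path c" "path_image c \<subseteq> exterior k \<phi>" "pathstart c = z1" "pathfinish c = z1"
  shows "((a0, a1 +++ c), (b0, b1 +++ c)) \<in> bq_rel k \<phi> z0 z1"
  using bq_rel_swap[OF bq_rel_append_loop[OF bq_rel_swap[OF assms(1)] assms(2-)]] .

lemma bq_rel_append_loop_reversepath_snd:
  assumes "(a0, a1) \<in> bq_pairs k \<phi> z0 z1"
    and "path c" "path_image c \<subseteq> exterior k \<phi>" "pathstart c = z1" "pathfinish c = z1"
  shows "((a0, (a1 +++ c) +++ reversepath c), (a0, a1)) \<in> bq_rel k \<phi> z0 z1"
  using bq_rel_swap[OF bq_rel_append_loop_reversepath[OF bq_pairs_swap[OF assms(1)] assms(2-)]] .

lemma bij_betw_bq_append_loop:
  assumes "path c" "path_image c \<subseteq> exterior k \<phi>" "pathstart c = z0" "pathfinish c = z0"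
  shows "bij_betw (\<lambda>X. bq_rel k \<phi> z0 z1 `` {(fst (SOME x. x \<in> X) +++ c, snd (SOME x. x \<in> X))})
           (top_biquandle k \<phi> z0 z1) (top_biquandle k \<phi> z0 z1)"
  unfolding top_biquandle_def
proof (rule bij_betw_quotient_map[OF equiv_bq_rel, where T = "\<lambda>x. (fst x +++ c, snd x)"
      and T' = "\<lambda>x. (fst x +++ reversepath c, snd x)", simplified])
  have c': "path (reversepath c)" "path_image (reversepath c) \<subseteq> exterior k \<phi>"
    "pathstart (reversepath c) = z0" "pathfinish (reversepath c) = z0"
    using assms by auto
  show "(fst x +++ c, snd x) \<in> bq_pairs k \<phi> z0 z1"
      "(fst x +++ reversepath c, snd x) \<in> bq_pairs k \<phi> z0 z1"
      "(((fst x +++ c) +++ reversepath c, snd x), x) \<in> bq_rel k \<phi> z0 z1"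
      "(((fst x +++ reversepath c) +++ c, snd x), x) \<in> bq_rel k \<phi> z0 z1"
    if "x \<in> bq_pairs k \<phi> z0 z1" for x
    using that bq_pairs_append_loop[OF _ assms] bq_pairs_append_loop[OF _ c']
      bq_rel_append_loop_reversepath[OF _ assms] bq_rel_append_loop_reversepath[OF _ c', simplified]
    by (metis prod.collapse)+
  show "((fst x +++ c, snd x), (fst y +++ c, snd y)) \<in> bq_rel k \<phi> z0 z1"
      "((fst x +++ reversepath c, snd x), (fst y +++ reversepath c, snd y)) \<in> bq_rel k \<phi> z0 z1"
    if "(x, y) \<in> bq_rel k \<phi> z0 z1" for x y
    using that bq_rel_append_loop[OF _ assms] bq_rel_append_loop[OF _ c'] by (metis prod.collapse)+
qed

lemma bij_betw_bq_append_loop_snd: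
  assumes "path c" "path_image c \<subseteq> exterior k \<phi>" "pathstart c = z1" "pathfinish c = z1"
  shows "bij_betw (\<lambda>X. bq_rel k \<phi> z0 z1 `` {(fst (SOME x. x \<in> X), snd (SOME x. x \<in> X) +++ c)})
           (top_biquandle k \<phi> z0 z1) (top_biquandle k \<phi> z0 z1)"
  unfolding top_biquandle_def
proof (rule bij_betw_quotient_map[OF equiv_bq_rel, where T = "\<lambda>x. (fst x, snd x +++ c)"
      and T' = "\<lambda>x. (fst x, snd x +++ reversepath c)", simplified])
  have c': "path (reversepath c)" "path_image (reversepath c) \<subseteq> exterior k \<phi>"
    "pathstart (reversepath c) = z1" "pathfinish (reversepath c) = z1"
    using assms by auto
  show "(fst x, snd x +++ c) \<in> bq_pairs k \<phi> z0 z1"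
      "(fst x, snd x +++ reversepath c) \<in> bq_pairs k \<phi> z0 z1"
      "((fst x, (snd x +++ c) +++ reversepath c), x) \<in> bq_rel k \<phi> z0 z1"
      "((fst x, (snd x +++ reversepath c) +++ c), x) \<in> bq_rel k \<phi> z0 z1"
    if "x \<in> bq_pairs k \<phi> z0 z1" for x
    using that bq_pairs_append_loop_snd[OF _ assms] bq_pairs_append_loop_snd[OF _ c']
      bq_rel_append_loop_reversepath_snd[OF _ assms]
      bq_rel_append_loop_reversepath_snd[OF _ c', simplified]
    by (metis prod.collapse)+
  show "((fst x, snd x +++ c), (fst y, snd y +++ c)) \<in> bq_rel k \<phi> z0 z1"
      "((fst x, snd x +++ reversepath c), (fst y, snd y +++ reversepath c)) \<in> bq_rel k \<phi> z0 z1"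
    if "(x, y) \<in> bq_rel k \<phi> z0 z1" for x y
    using that bq_rel_append_loop_snd[OF _ assms] bq_rel_append_loop_snd[OF _ c'] by (metis prod.collapse)+
qed

section \<open>Meridian loops and the biquandle operations\<close>

lemma meridian_loop:
  assumes "tubular_link k \<phi>" "p \<in> bdry k \<phi>"
  shows "path (meridian k \<phi> p)" "path_image (meridian k \<phi> p) \<subseteq> bdry k \<phi>"
    and "pathstart (meridian k \<phi> p) = p" "pathfinish (meridian k \<phi> p) = p"
proof -
  obtain j u w where q: "inv_into (boundary_tori k) \<phi> p = (j, u, w)" by (metis prod.exhaust)
  have j: "(j, u, w) \<in> boundary_tori k" "\<phi> (j, u, w) = p"
    using assms(2) inv_into_into[of p \<phi> "boundary_tori k"] f_inv_into_f[of p \<phi> "boundary_tori k"]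
    by (auto simp: q bdry_def)
  have m: "meridian k \<phi> p = (\<lambda>t. \<phi> (j, u, w * cis (2 * pi * t)))"
    unfolding meridian_def q Let_def by simp
  have circle: "(j, u, w * cis (2 * pi * t)) \<in> boundary_tori k" for t
    using j(1) by (auto simp: boundary_tori_def norm_mult)
  have "boundary_tori k \<subseteq> solid_tori k" by (auto simp: boundary_tori_def solid_tori_def)
  then have "(\<lambda>t. (j, u, w * cis (2 * pi * t))) ` {0..1} \<subseteq> solid_tori k"
    using circle by blast
  moreover have "continuous_on {0..1} (\<lambda>t. (j, u, w * cis (2 * pi * t)))"
    by (intro continuous_intros)
  ultimately have "continuous_on {0..1} (\<lambda>t. \<phi> (j, u, w * cis (2 * pi * t)))"
    using assms(1) continuous_on_compose2 by (metis tubular_link_def)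
  then have "continuous_on {0..1} (meridian k \<phi> p)" by (simp only: m)
  then show "path (meridian k \<phi> p)" by (simp add: path_def)
  show "path_image (meridian k \<phi> p) \<subseteq> bdry k \<phi>"
    using circle by (auto simp: m path_image_def bdry_def)
  show "pathstart (meridian k \<phi> p) = p" "pathfinish (meridian k \<phi> p) = p"
    by (simp_all add: m j(2) pathstart_def pathfinish_def)
qed

definition conj_meridian :: "nat \<Rightarrow> (nat \<times> complex \<times> complex \<Rightarrow> real^4) \<Rightarrow> (real \<Rightarrow> real^4)
    \<Rightarrow> real \<Rightarrow> real^4" where
  "conj_meridian k \<phi> b = reversepath b +++ (meridian k \<phi> (pathstart b) +++ b)"

lemma conj_meridian_loop:
  assumes "tubular_link k \<phi>" "bdry k \<phi> \<subseteq> exterior k \<phi>"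
    and "path b" "path_image b \<subseteq> exterior k \<phi>" "pathstart b \<in> bdry k \<phi>"
  shows "path (conj_meridian k \<phi> b)" "path_image (conj_meridian k \<phi> b) \<subseteq> exterior k \<phi>"
    and "pathstart (conj_meridian k \<phi> b) = pathfinish b" "pathfinish (conj_meridian k \<phi> b) = pathfinish b"
proof -
  note m = meridian_loop[OF assms(1,5)]
  have "path_image (meridian k \<phi> (pathstart b) +++ b) \<subseteq> exterior k \<phi>"
    using m(2) assms(2,4) path_image_join_subset[of "meridian k \<phi> (pathstart b)" b] by blast
  then show "path_image (conj_meridian k \<phi> b) \<subseteq> exterior k \<phi>"
    using assms(4) path_image_join_subset[of "reversepath b" "meridian k \<phi> (pathstart b) +++ b"]
    unfolding conj_meridian_def by auto
qed (use meridian_loop[OF assms(1,5)] assms in \<open>simp_all add: conj_meridian_def\<close>)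

lemma bq_up_eq:
  "bq_up k \<phi> z0 z1 X Y = bq_rel k \<phi> z0 z1 ``
     {(fst (SOME x. x \<in> X) +++ conj_meridian k \<phi> (fst (SOME y. y \<in> Y)), snd (SOME x. x \<in> X))}"
  by (simp add: bq_up_def conj_meridian_def Let_def)

lemma bq_down_eq:
  "bq_down k \<phi> z0 z1 X Y = bq_rel k \<phi> z0 z1 ``
     {(fst (SOME x. x \<in> X), snd (SOME x. x \<in> X) +++ conj_meridian k \<phi> (snd (SOME y. y \<in> Y)))}"
  by (simp add: bq_down_def conj_meridian_def Let_def)

theorem mainTheorem5:
  fixes k :: nat
    and \<phi> :: "nat \<times> complex \<times> complex \<Rightarrow> real^4"
    and \<beta> :: "real^3 \<Rightarrow> real^4"
    and v :: "real^3"
    and a :: "((real \<Rightarrow> real^4) \<times> (real \<Rightarrow> real^4)) set"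
  assumes "0 < k"
    and "tubular_link k \<phi>"
    and "continuous_on (cball 0 1) \<beta>" and "inj_on \<beta> (cball 0 1)" and "\<beta> ` cball 0 1 \<subseteq> S3"
    and "nbhd k \<phi> \<subseteq> \<beta> ` ball 0 1"
    and "norm v = 1"
    and "a \<in> top_biquandle k \<phi> (\<beta> v) (\<beta> (- v))"
  shows "bij_betw (\<lambda>x. bq_up k \<phi> (\<beta> v) (\<beta> (- v)) x a)
            (top_biquandle k \<phi> (\<beta> v) (\<beta> (- v))) (top_biquandle k \<phi> (\<beta> v) (\<beta> (- v)))
       \<and> bij_betw (\<lambda>x. bq_down k \<phi> (\<beta> v) (\<beta> (- v)) x a)
            (top_biquandle k \<phi> (\<beta> v) (\<beta> (- v))) (top_biquandle k \<phi> (\<beta> v) (\<beta> (- v)))"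
proof -
  have BE: "bdry k \<phi> \<subseteq> exterior k \<phi>"
    using assms(2-6) by (rule bdry_subset_exterior)
  obtain b0 b1 where b: "(SOME y. y \<in> a) = (b0, b1)" by fastforce
  have "a \<noteq> {}" "a \<subseteq> bq_pairs k \<phi> (\<beta> v) (\<beta> (- v))"
    using assms(8) in_quotient_imp_non_empty[OF equiv_bq_rel] in_quotient_imp_subset[OF equiv_bq_rel]
    by (auto simp: top_biquandle_def)
  then have "(b0, b1) \<in> bq_pairs k \<phi> (\<beta> v) (\<beta> (- v))"
    unfolding b[symmetric] by (metis some_in_eq subsetD)
  then have b0: "path b0" "path_image b0 \<subseteq> exterior k \<phi>" "pathstart b0 \<in> bdry k \<phi>"
    and b1: "path b1" "path_image b1 \<subseteq> exterior k \<phi>" "pathstart b1 \<in> bdry k \<phi>"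
    and "pathfinish b0 = \<beta> v" "pathfinish b1 = \<beta> (- v)"
    by (auto simp: bq_pairs_def)
  then show ?thesis
    using bij_betw_bq_append_loop[OF conj_meridian_loop[OF assms(2) BE b0]]
      bij_betw_bq_append_loop_snd[OF conj_meridian_loop[OF assms(2) BE b1]]
    unfolding bq_up_eq bq_down_eq b fst_conv snd_conv by simp
qed

end
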